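(* Let $X$ and $Y$ be completely regular Hausdorff spaces and $c: X\times Y\to\mathbb{R}$ a bounded function with property (H). Let $R: C_b(X)\times C_b(Y)\to\mathbb{R}\cup\{-\infty\}$ be a proper function (not identically $-\infty$) such that: (i) $R$ is $\oplus$-nondecreasing; (ii) for every $C\in\mathcal{E}(X)$ and $D\in\mathcal{E}(Y)$, the restriction of $R$ to $C\times D$ is upper semicontinuous for the product of the topologies $\mathcal{T}_p$ (pointwise convergence) on $C$ and on $D$. Then the problem $$v_{\max}(\mathbf{GDP}):=\sup\{R(\xi,\zeta):\ \xi\in C_b(X),\ \zeta\in C_b(Y),\ \xi\oplus\zeta\le c\}$$ has a solution of the form $(\xi_0^{c\bar c},\xi_0^c)\in C_b(X)\times C_b(Y)$ for some $\xi_0\in C_b(X)$; i.e. $\xi_0^{c\bar c}\oplus\xi_0^c\le c$ and $R(\xi_0^{c\bar c},\xi_0^c)=v_{\max}(\mathbf{GDP})$.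
   Context: $C_b(Z)$: real-valued bounded continuous functions on $Z$; $\mathcal{T}_p$: topology of pointwise convergence; $\mathcal{E}(Z)$: family of uniformly bounded equicontinuous subsets of $C_b(Z)$. $(\phi\oplus\psi)(x,y):=\phi(x)+\psi(y)$, and $\phi\oplus\psi\le\phi'\oplus\psi'$ means pointwise inequality on $X\times Y$. $R$ is $\oplus$-nondecreasing if $\phi\oplus\psi\le\phi'\oplus\psi'$ implies $R(\phi,\psi)\le R(\phi',\psi')$. For $\xi: X\to\mathbb{R}$, $\xi^c(y):=\inf_{x\in X}\{c(x,y)-\xi(x)\}$; for $\zeta:Y\to\mathbb{R}$, $\zeta^{\bar c}(x):=\inf_{y\in Y}\{c(x,y)-\zeta(y)\}$; $\xi^{c\bar c}:=(\xi^c)^{\bar c}$. With $\overline{d}_c(x,x'):=\sup_{y}|c(x,y)-c(x',y)|$ and $\underline{d}_c(y,y'):=\sup_{x}|c(x,y)-c(x,y')|$, $c$ has property (H) if $\lim_{x\to x_0}\overline{d}_c(x,x_0)=0$ for every $x_0\in X$ and $\lim_{y\to y_0}\underline{d}_c(y,y_0)=0$ for every $y_0\in Y$. *)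

theory Defs
  imports "HOL-Analysis.Analysis"
begin

definition Cb :: "('a::topological_space \<Rightarrow> real) set" where
  "Cb = {f. continuous_on UNIV f \<and> bounded (range f)}"

definition oplus :: "('a \<Rightarrow> real) \<Rightarrow> ('b \<Rightarrow> real) \<Rightarrow> 'a \<Rightarrow> 'b \<Rightarrow> real" where
  "oplus \<phi> \<psi> = (\<lambda>x y. \<phi> x + \<psi> y)"

definition unif_bdd_equicont :: "('a::topological_space \<Rightarrow> real) set \<Rightarrow> bool" where
  "unif_bdd_equicont C \<longleftrightarrow> C \<subseteq> Cb \<and>
     (\<exists>M. \<forall>f\<in>C. \<forall>z. \<bar>f z\<bar> \<le> M) \<and>
     (\<forall>z. \<forall>\<epsilon>>0. \<exists>U. open U \<and> z \<in> U \<and> (\<forall>f\<in>C. \<forall>z'\<in>U. \<bar>f z' - f z\<bar> < \<epsilon>))"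

definition ctrans :: "('a \<Rightarrow> 'b \<Rightarrow> real) \<Rightarrow> ('a \<Rightarrow> real) \<Rightarrow> 'b \<Rightarrow> real" where
  "ctrans c \<xi> = (\<lambda>y. INF x. c x y - \<xi> x)"

definition cbtrans :: "('a \<Rightarrow> 'b \<Rightarrow> real) \<Rightarrow> ('b \<Rightarrow> real) \<Rightarrow> 'a \<Rightarrow> real" where
  "cbtrans c \<zeta> = (\<lambda>x. INF y. c x y - \<zeta> y)"

definition dbar :: "('a \<Rightarrow> 'b \<Rightarrow> real) \<Rightarrow> 'a \<Rightarrow> 'a \<Rightarrow> real" where
  "dbar c x x' = (SUP y. \<bar>c x y - c x' y\<bar>)"

definition dunder :: "('a \<Rightarrow> 'b \<Rightarrow> real) \<Rightarrow> 'b \<Rightarrow> 'b \<Rightarrow> real" where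
  "dunder c y y' = (SUP x. \<bar>c x y - c x y'\<bar>)"

definition property_H :: "('a::topological_space \<Rightarrow> 'b::topological_space \<Rightarrow> real) \<Rightarrow> bool" where
  "property_H c \<longleftrightarrow>
     (\<forall>x0. ((\<lambda>x. dbar c x x0) \<longlongrightarrow> 0) (at x0)) \<and>
     (\<forall>y0. ((\<lambda>y. dunder c y y0) \<longlongrightarrow> 0) (at y0))"

definition usc_on :: "'a::topological_space set \<Rightarrow> ('a \<Rightarrow> ereal) \<Rightarrow> bool" where
  "usc_on S f \<longleftrightarrow> (\<forall>p\<in>S. \<forall>t. f p < t \<longrightarrow>
      (\<exists>U. open U \<and> p \<in> U \<and> (\<forall>q\<in>U \<inter> S. f q < t)))"

definition vmax_GDP :: "('a::topological_space \<Rightarrow> 'b::topological_space \<Rightarrow> real)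
    \<Rightarrow> (('a \<Rightarrow> real) \<Rightarrow> ('b \<Rightarrow> real) \<Rightarrow> ereal) \<Rightarrow> ereal" where
  "vmax_GDP c R = (SUP p \<in> {(\<xi>, \<zeta>). \<xi> \<in> Cb \<and> \<zeta> \<in> Cb \<and> oplus \<xi> \<zeta> \<le> c}. R (fst p) (snd p))"

end

(* Let M bound |c|. For bounded xi, the c-transform xi^c is bounded and 1-Lipschitz for the
   pseudometric d_c (dunder c), and a cbar-transform is 1-Lipschitz for dbar c; moreover
   xi (+) zeta <= xi^{c cbar} (+) xi^c <= c for every feasible pair (xi, zeta).  Subtracting the
   constant xi^c(y0) from xi^c and adding it to xi^{c cbar} normalises this pair, so every feasible
   pair is dominated by a feasible pair of 1-Lipschitz functions bounded by 3M.  These pairs form a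
   set that is compact for pointwise convergence (Tychonoff) and equicontinuous by property (H),
   so the upper semicontinuous R attains its maximum over it at some (phi, psi); by monotonicity
   this is the value of the whole problem, and (phi^{c cbar}, phi^c) dominates (phi, psi). *)

theory Submission
  imports Defs
begin

section \<open>c-transforms of bounded functions\<close>

lemma oplus_le_iff: "oplus \<phi> \<psi> \<le> c \<longleftrightarrow> (\<forall>x y. \<phi> x + \<psi> y \<le> c x y)"
  by (simp add: oplus_def le_fun_def)

lemma oplus_mono: "(\<And>x. \<phi> x \<le> \<phi>' x) \<Longrightarrow> (\<And>y. \<psi> y \<le> \<psi>' y) \<Longrightarrow> oplus \<phi> \<psi> \<le> oplus \<phi>' \<psi>'"
  by (simp add: oplus_def le_fun_def add_mono)

lemma ctrans_le:
  assumes c: "\<And>x y. \<bar>c x y\<bar> \<le> M" and g: "\<And>x. \<bar>g x\<bar> \<le> A"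
  shows "ctrans c g y \<le> c x y - g x"
proof -
  have "bdd_below (range (\<lambda>x. c x y - g x))"
  proof (rule bdd_belowI2)
    fix x show "- M - A \<le> c x y - g x"
      using c[of x y] g[of x] by (simp add: abs_le_iff)
  qed
  then show ?thesis
    unfolding ctrans_def by (rule cINF_lower) simp
qed

lemma ctrans_greatest: "(\<And>x. t \<le> c x y - g x) \<Longrightarrow> t \<le> ctrans c g y"
  unfolding ctrans_def by (rule cINF_greatest) auto

lemma abs_ctrans_le:
  assumes c: "\<And>x y. \<bar>c x y\<bar> \<le> M" and g: "\<And>x. \<bar>g x\<bar> \<le> A"
  shows "\<bar>ctrans c g y\<bar> \<le> M + A"
proof -
  have "ctrans c g y \<le> c undefined y - g undefined"
    by (rule ctrans_le[OF c g])
  moreover have "- M - A \<le> ctrans c g y"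
  proof (rule ctrans_greatest)
    fix x show "- M - A \<le> c x y - g x"
      using c[of x y] g[of x] by (simp add: abs_le_iff)
  qed
  ultimately show ?thesis
    using c[of undefined y] g[of undefined] by (simp add: abs_le_iff)
qed

lemma abs_diff_le_dunder:
  assumes c: "\<And>x y. \<bar>c x y\<bar> \<le> M"
  shows "\<bar>c x y - c x y'\<bar> \<le> dunder c y y'"
proof -
  have "bdd_above (range (\<lambda>x. \<bar>c x y - c x y'\<bar>))"
  proof (rule bdd_aboveI2)
    fix x show "\<bar>c x y - c x y'\<bar> \<le> 2 * M"
      using c[of x y] c[of x y'] by (simp add: abs_le_iff)
  qed
  then show ?thesis
    unfolding dunder_def by (rule cSUP_upper[rotated]) simp
qed

lemma dunder_le:
  assumes c: "\<And>x y. \<bar>c x y\<bar> \<le> M"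
  shows "dunder c y y' \<le> 2 * M"
  unfolding dunder_def
proof (rule cSUP_least)
  fix x show "\<bar>c x y - c x y'\<bar> \<le> 2 * M"
    using c[of x y] c[of x y'] by (simp add: abs_le_iff)
qed simp

lemma dunder_commute: "dunder c y y' = dunder c y' y"
  unfolding dunder_def by (simp add: abs_minus_commute)

lemma dbar_eq_dunder_swap: "dbar c = dunder (\<lambda>y x. c x y)"
  unfolding dbar_def dunder_def by (simp add: fun_eq_iff)

lemma cbtrans_eq_ctrans_swap: "cbtrans c = ctrans (\<lambda>y x. c x y)"
  unfolding cbtrans_def ctrans_def by simp

lemma ctrans_dunder_Lipschitz:
  assumes c: "\<And>x y. \<bar>c x y\<bar> \<le> M" and g: "\<And>x. \<bar>g x\<bar> \<le> A"
  shows "\<bar>ctrans c g y - ctrans c g y'\<bar> \<le> dunder c y y'"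
proof -
  have "ctrans c g y - dunder c y y' \<le> ctrans c g y'" for y y'
  proof (rule ctrans_greatest)
    fix x
    show "ctrans c g y - dunder c y y' \<le> c x y' - g x"
      using ctrans_le[of c M g A y x, OF c g] abs_diff_le_dunder[of c M x y y', OF c] by linarith
  qed
  from this[of y y'] this[of y' y] show ?thesis
    unfolding abs_le_iff dunder_commute[of c y' y] by linarith
qed

lemma le_ctrans_if_feasible: "(\<And>x. \<xi> x + \<zeta> y \<le> c x y) \<Longrightarrow> \<zeta> y \<le> ctrans c \<xi> y"
  by (rule ctrans_greatest) (simp add: algebra_simps)

lemma ctrans_feasible:
  assumes c: "\<And>x y. \<bar>c x y\<bar> \<le> M" and \<xi>: "\<And>x. \<bar>\<xi> x\<bar> \<le> A"
  shows "\<xi> x + ctrans c \<xi> y \<le> c x y"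
  using ctrans_le[of c M \<xi> A y x, OF c \<xi>] by simp

lemma le_cbtrans_if_feasible: "(\<And>y. \<xi> x + \<zeta> y \<le> c x y) \<Longrightarrow> \<xi> x \<le> cbtrans c \<zeta> x"
  unfolding cbtrans_eq_ctrans_swap by (rule le_ctrans_if_feasible) (simp add: add.commute)

lemma cbtrans_feasible:
  assumes c: "\<And>x y. \<bar>c x y\<bar> \<le> M" and \<zeta>: "\<And>y. \<bar>\<zeta> y\<bar> \<le> A"
  shows "cbtrans c \<zeta> x + \<zeta> y \<le> c x y"
  using ctrans_feasible[of "\<lambda>y x. c x y", OF c \<zeta>] by (simp add: cbtrans_eq_ctrans_swap add.commute)

lemma double_ctrans_feasible:
  assumes c: "\<And>x y. \<bar>c x y\<bar> \<le> M" and \<xi>: "\<And>x. \<bar>\<xi> x\<bar> \<le> A"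
  shows "oplus (cbtrans c (ctrans c \<xi>)) (ctrans c \<xi>) \<le> c"
  unfolding oplus_le_iff
  using cbtrans_feasible[of c M "ctrans c \<xi>" "M + A", OF c abs_ctrans_le[of c M \<xi> A, OF c \<xi>]]
  by blast

lemma double_ctrans_improves:
  assumes c: "\<And>x y. \<bar>c x y\<bar> \<le> M" and \<xi>: "\<And>x. \<bar>\<xi> x\<bar> \<le> A" and feas: "oplus \<xi> \<zeta> \<le> c"
  shows "oplus \<xi> \<zeta> \<le> oplus (cbtrans c (ctrans c \<xi>)) (ctrans c \<xi>)"
proof (rule oplus_mono)
  show "\<zeta> y \<le> ctrans c \<xi> y" for y
    using feas by (intro le_ctrans_if_feasible) (simp add: oplus_le_iff)
  show "\<xi> x \<le> cbtrans c (ctrans c \<xi>) x" for x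
    by (rule le_cbtrans_if_feasible) (rule ctrans_feasible[of c M \<xi> A, OF c \<xi>])
qed

section \<open>Bounded functions that are 1-Lipschitz for a pseudometric\<close>

definition lip_bdd_set :: "('z \<Rightarrow> 'z \<Rightarrow> real) \<Rightarrow> real \<Rightarrow> ('z \<Rightarrow> real) set" where
  "lip_bdd_set d B = {g. (\<forall>z. \<bar>g z\<bar> \<le> B) \<and> (\<forall>z z'. \<bar>g z - g z'\<bar> \<le> d z z')}"

lemma ctrans_in_lip_bdd_set:
  assumes c: "\<And>x y. \<bar>c x y\<bar> \<le> M" and g: "\<And>x. \<bar>g x\<bar> \<le> A"
  shows "ctrans c g \<in> lip_bdd_set (dunder c) (M + A)"
  unfolding lip_bdd_set_def mem_Collect_eq
  using abs_ctrans_le[of c M g A, OF c g] ctrans_dunder_Lipschitz[of c M g A, OF c g] by simp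

lemma cbtrans_in_lip_bdd_set:
  assumes c: "\<And>x y. \<bar>c x y\<bar> \<le> M" and g: "\<And>y. \<bar>g y\<bar> \<le> A"
  shows "cbtrans c g \<in> lip_bdd_set (dbar c) (M + A)"
  unfolding cbtrans_eq_ctrans_swap dbar_eq_dunder_swap
  by (rule ctrans_in_lip_bdd_set) (use c g in auto)

lemma compact_lip_bdd_set: "compact (lip_bdd_set d B)"
proof -
  have "compact (PiE UNIV (\<lambda>_::'z. {-B..B}))"
    using compactin_PiE[of "\<lambda>_. euclidean" UNIV "\<lambda>_::'z. {-B..B}"]
    by (simp add: euclidean_product_topology)
  moreover have "closed (lip_bdd_set d B)"
  proof -
    have "lip_bdd_set d B = (\<Inter>z. {g. \<bar>g z\<bar> \<le> B}) \<inter> (\<Inter>z. \<Inter>z'. {g. \<bar>g z - g z'\<bar> \<le> d z z'})"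
      unfolding lip_bdd_set_def by blast
    then show ?thesis
      by (simp only:) (intro closed_Int closed_INT ballI closed_Collect_le continuous_intros
          continuous_on_product_coordinates)
  qed
  moreover have "lip_bdd_set d B \<subseteq> PiE UNIV (\<lambda>_. {-B..B})"
    unfolding lip_bdd_set_def by (auto simp: abs_le_iff) (metis minus_le_iff)
  ultimately show ?thesis
    using compact_Int_closed[of "PiE UNIV (\<lambda>_. {-B..B})" "lip_bdd_set d B"] by (simp add: Int_absorb1)
qed

lemma lip_bdd_set_subset_Cb:
  assumes d: "\<And>z. ((\<lambda>z'. d z' z) \<longlongrightarrow> 0) (at z)"
  shows "lip_bdd_set d B \<subseteq> Cb"
proof
  fix g assume g: "g \<in> lip_bdd_set d B"
  have "(g \<longlongrightarrow> g z) (at z)" for z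
  proof -
    have "((\<lambda>z'. g z' - g z) \<longlongrightarrow> 0) (at z)"
      by (rule Lim_null_comparison[OF _ d]) (use g in \<open>auto simp: lip_bdd_set_def\<close>)
    then show ?thesis by (simp add: LIM_zero_iff)
  qed
  then have "continuous_on UNIV g" by (simp add: continuous_on_def)
  moreover have "bounded (range g)" using g unfolding lip_bdd_set_def bounded_iff by auto
  ultimately show "g \<in> Cb" by (simp add: Cb_def)
qed

lemma unif_bdd_equicont_lip_bdd_set:
  assumes d: "\<And>z. ((\<lambda>z'. d z' z) \<longlongrightarrow> 0) (at z)"
  shows "unif_bdd_equicont (lip_bdd_set d B)"
  unfolding unif_bdd_equicont_def
proof (intro conjI allI impI)
  show "lip_bdd_set d B \<subseteq> Cb" by (rule lip_bdd_set_subset_Cb[OF d])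
  show "\<exists>M. \<forall>f\<in>lip_bdd_set d B. \<forall>z. \<bar>f z\<bar> \<le> M" by (auto simp: lip_bdd_set_def)
next
  fix z and e :: real assume "0 < e"
  then have "\<forall>\<^sub>F z' in at z. d z' z < e"
    using d by (rule order_tendstoD(2)[rotated])
  then obtain U where U: "open U" "z \<in> U" "\<And>z'. z' \<in> U \<Longrightarrow> z' \<noteq> z \<Longrightarrow> d z' z < e"
    unfolding eventually_at_topological by auto
  have "\<bar>f z' - f z\<bar> < e" if "f \<in> lip_bdd_set d B" "z' \<in> U" for f z'
  proof (cases "z' = z")
    case False
    have "\<bar>f z' - f z\<bar> \<le> d z' z"
      using that(1) unfolding lip_bdd_set_def by blast
    with U(3)[OF that(2) False] show ?thesis
      by linarith
  qed (simp add: \<open>0 < e\<close>)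
  with U show "\<exists>U. open U \<and> z \<in> U \<and> (\<forall>f\<in>lip_bdd_set d B. \<forall>z'\<in>U. \<bar>f z' - f z\<bar> < e)"
    by blast
qed

lemma lip_bdd_sets_subset_Cb:
  assumes "property_H c"
  shows "lip_bdd_set (dbar c) B \<subseteq> Cb" and "lip_bdd_set (dunder c) B \<subseteq> Cb"
  using assms by (simp_all add: property_H_def lip_bdd_set_subset_Cb)

lemma unif_bdd_equicont_lip_bdd_sets:
  assumes "property_H c"
  shows "unif_bdd_equicont (lip_bdd_set (dbar c) B)" and "unif_bdd_equicont (lip_bdd_set (dunder c) B)"
  using assms by (simp_all add: property_H_def unif_bdd_equicont_lip_bdd_set)

lemma double_ctrans_in_Cb:
  assumes H: "property_H c" and c: "\<And>x y. \<bar>c x y\<bar> \<le> M" and \<xi>: "\<And>x. \<bar>\<xi> x\<bar> \<le> A"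
  shows "ctrans c \<xi> \<in> Cb" and "cbtrans c (ctrans c \<xi>) \<in> Cb"
proof -
  show "ctrans c \<xi> \<in> Cb"
    using ctrans_in_lip_bdd_set[of c M \<xi> A, OF c \<xi>] lip_bdd_sets_subset_Cb[OF H] by blast
  have "cbtrans c (ctrans c \<xi>) \<in> lip_bdd_set (dbar c) (M + (M + A))"
    by (rule cbtrans_in_lip_bdd_set[of c M "ctrans c \<xi>" "M + A", OF c abs_ctrans_le[of c M \<xi> A, OF c \<xi>]])
  then show "cbtrans c (ctrans c \<xi>) \<in> Cb"
    using lip_bdd_sets_subset_Cb[OF H] by blast
qed

section \<open>Upper semicontinuous functions on compact sets\<close>

lemma usc_on_subset:
  assumes "usc_on S f" and "T \<subseteq> S"
  shows "usc_on T f"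
  unfolding usc_on_def
proof (intro ballI allI impI)
  fix p t assume "p \<in> T" "f p < t"
  with assms obtain U where "open U" "p \<in> U" "\<forall>q\<in>U \<inter> S. f q < t"
    unfolding usc_on_def by (meson subsetD)
  with \<open>T \<subseteq> S\<close> show "\<exists>U. open U \<and> p \<in> U \<and> (\<forall>q\<in>U \<inter> T. f q < t)"
    by fast
qed

lemma usc_on_attains_max:
  fixes f :: "'p::topological_space \<Rightarrow> ereal"
  assumes "compact K" "K \<noteq> {}" "usc_on K f"
  shows "\<exists>p\<in>K. \<forall>q\<in>K. f q \<le> f p"
proof (rule ccontr)
  assume "\<not> ?thesis"
  then obtain Q where Q: "\<And>p. p \<in> K \<Longrightarrow> Q p \<in> K \<and> f p < f (Q p)"
    by (metis not_le)
  have "\<forall>p\<in>K. \<exists>U. open U \<and> p \<in> U \<and> (\<forall>q\<in>U \<inter> K. f q < f (Q p))"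
    using \<open>usc_on K f\<close> Q unfolding usc_on_def by blast
  then obtain U where U: "\<And>p. p \<in> K \<Longrightarrow> open (U p) \<and> p \<in> U p \<and> (\<forall>q\<in>U p \<inter> K. f q < f (Q p))"
    by metis
  obtain F where F: "F \<subseteq> K" "finite F" "K \<subseteq> (\<Union>p\<in>F. U p)"
    using compactE_image[OF \<open>compact K\<close>, of K U] U by blast
  define m where "m = Max ((\<lambda>p. f (Q p)) ` F)"
  have "F \<noteq> {}" using F \<open>K \<noteq> {}\<close> by blast
  then have "m \<in> (\<lambda>p. f (Q p)) ` F"
    unfolding m_def using F(2) by (intro Max_in) auto
  then obtain p0 where "p0 \<in> F" "f (Q p0) = m"
    by blast
  then obtain p where p: "p \<in> F" "Q p0 \<in> U p"
    using F Q by blast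
  then have "m < f (Q p)"
    using U F Q \<open>p0 \<in> F\<close> \<open>f (Q p0) = m\<close> by blast
  moreover have "f (Q p) \<le> m"
    unfolding m_def using F(2) p(1) by simp
  ultimately show False
    by simp
qed

section \<open>Normalised feasible pairs\<close>

definition feasible_lip_pairs :: "('a \<Rightarrow> 'b \<Rightarrow> real) \<Rightarrow> real \<Rightarrow> (('a \<Rightarrow> real) \<times> ('b \<Rightarrow> real)) set" where
  "feasible_lip_pairs c B =
     {(\<phi>, \<psi>). \<phi> \<in> lip_bdd_set (dbar c) B \<and> \<psi> \<in> lip_bdd_set (dunder c) B \<and> oplus \<phi> \<psi> \<le> c}"

lemma compact_feasible_lip_pairs: "compact (feasible_lip_pairs c B)"
proof -
  have closed_feasible: "closed {p :: ('a \<Rightarrow> real) \<times> ('b \<Rightarrow> real). fst p x + snd p y \<le> c x y}" for x y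
  proof -
    have "continuous_on UNIV (\<lambda>p :: ('a \<Rightarrow> real) \<times> ('b \<Rightarrow> real). fst p x)"
      by (rule continuous_on_compose2[OF continuous_on_product_coordinates continuous_on_fst]) auto
    moreover have "continuous_on UNIV (\<lambda>p :: ('a \<Rightarrow> real) \<times> ('b \<Rightarrow> real). snd p y)"
      by (rule continuous_on_compose2[OF continuous_on_product_coordinates continuous_on_snd]) auto
    ultimately show ?thesis
      by (intro closed_Collect_le continuous_intros) auto
  qed
  have "feasible_lip_pairs c B = (lip_bdd_set (dbar c) B \<times> lip_bdd_set (dunder c) B) \<inter>
      (\<Inter>x. \<Inter>y. {p. fst p x + snd p y \<le> c x y})"
    unfolding feasible_lip_pairs_def oplus_le_iff by auto
  then show ?thesis
    by (simp only:) (intro compact_Int_closed compact_Times compact_lip_bdd_set closed_INT ballI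
        closed_feasible)
qed

lemma feasible_lip_pairs_subset:
  "feasible_lip_pairs c B \<subseteq> lip_bdd_set (dbar c) B \<times> lip_bdd_set (dunder c) B"
  unfolding feasible_lip_pairs_def by auto

lemma feasible_lip_pairs_subset_Cb: "property_H c \<Longrightarrow> feasible_lip_pairs c B \<subseteq> Cb \<times> Cb"
  using feasible_lip_pairs_subset lip_bdd_sets_subset_Cb by blast

lemma feasible_pair_le_feasible_lip_pair:
  assumes c: "\<And>x y. \<bar>c x y\<bar> \<le> M" and \<xi>: "\<And>x. \<bar>\<xi> x\<bar> \<le> A" and feas: "oplus \<xi> \<zeta> \<le> c"
  shows "\<exists>\<phi> \<psi>. (\<phi>, \<psi>) \<in> feasible_lip_pairs c (3 * M) \<and> oplus \<xi> \<zeta> \<le> oplus \<phi> \<psi>"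
proof -
  define a where "a = ctrans c \<xi> undefined"
  define \<psi> where "\<psi> y = ctrans c \<xi> y - a" for y
  define \<phi> where "\<phi> = cbtrans c \<psi>"
  have M: "0 \<le> M"
    using c[of undefined undefined] by linarith
  have \<psi>_Lip: "\<bar>\<psi> y - \<psi> y'\<bar> \<le> dunder c y y'" for y y'
    using ctrans_dunder_Lipschitz[of c M \<xi> A, OF c \<xi>] by (simp add: \<psi>_def)
  have \<psi>_bdd: "\<bar>\<psi> y\<bar> \<le> 2 * M" for y
  proof -
    have "\<bar>\<psi> y\<bar> = \<bar>\<psi> y - \<psi> undefined\<bar>"
      by (simp add: \<psi>_def a_def)
    also have "\<dots> \<le> dunder c y undefined"
      by (rule \<psi>_Lip)
    also have "\<dots> \<le> 2 * M"
      by (rule dunder_le[of c M, OF c])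
    finally show ?thesis .
  qed
  have "\<psi> \<in> lip_bdd_set (dunder c) (3 * M)"
    unfolding lip_bdd_set_def using \<psi>_Lip order_trans[OF \<psi>_bdd] M by force
  moreover have "\<phi> \<in> lip_bdd_set (dbar c) (3 * M)"
    using cbtrans_in_lip_bdd_set[of c M \<psi> "2 * M", OF c \<psi>_bdd] by (simp add: \<phi>_def)
  moreover have "oplus \<phi> \<psi> \<le> c"
    unfolding oplus_le_iff \<phi>_def using cbtrans_feasible[of c M \<psi> "2 * M", OF c \<psi>_bdd] by blast
  moreover have "oplus \<xi> \<zeta> \<le> oplus \<phi> \<psi>"
  proof -
    have \<zeta>_le: "\<zeta> y \<le> \<psi> y + a" for y
      using le_ctrans_if_feasible[of \<xi> \<zeta> y c] feas by (simp add: oplus_le_iff \<psi>_def)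
    have \<xi>_le: "\<xi> x + a \<le> \<phi> x" for x
      unfolding \<phi>_def
      by (rule le_cbtrans_if_feasible) (use ctrans_feasible[of c M \<xi> A, OF c \<xi>] in \<open>simp add: \<psi>_def\<close>)
    have "\<xi> x + \<zeta> y \<le> \<phi> x + \<psi> y" for x y
      using \<zeta>_le[of y] \<xi>_le[of x] by linarith
    then show ?thesis
      by (simp add: oplus_def le_fun_def)
  qed
  ultimately show ?thesis
    unfolding feasible_lip_pairs_def by blast
qed

lemma vmax_GDP_upper: "\<xi> \<in> Cb \<Longrightarrow> \<zeta> \<in> Cb \<Longrightarrow> oplus \<xi> \<zeta> \<le> c \<Longrightarrow> R \<xi> \<zeta> \<le> vmax_GDP c R"
  unfolding vmax_GDP_def by (rule SUP_upper2[where i="(\<xi>, \<zeta>)"]) auto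

lemma vmax_GDP_le_max_on_feasible_lip_pairs:
  assumes c: "\<And>x y. \<bar>c x y\<bar> \<le> M" and H: "property_H c"
    and R_mono: "\<forall>\<phi>\<in>Cb. \<forall>\<psi>\<in>Cb. \<forall>\<phi>'\<in>Cb. \<forall>\<psi>'\<in>Cb.
                   oplus \<phi> \<psi> \<le> oplus \<phi>' \<psi>' \<longrightarrow> R \<phi> \<psi> \<le> R \<phi>' \<psi>'"
    and max: "\<And>\<phi> \<psi>. (\<phi>, \<psi>) \<in> feasible_lip_pairs c (3 * M) \<Longrightarrow> R \<phi> \<psi> \<le> R \<phi>\<^sub>0 \<psi>\<^sub>0"
  shows "vmax_GDP c R \<le> R \<phi>\<^sub>0 \<psi>\<^sub>0"
  unfolding vmax_GDP_def
proof (rule SUP_least, clarsimp)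
  fix \<xi> \<zeta> assume \<xi>: "\<xi> \<in> Cb" and \<zeta>: "\<zeta> \<in> Cb" and feas: "oplus \<xi> \<zeta> \<le> c"
  obtain A where A: "\<And>x. \<bar>\<xi> x\<bar> \<le> A"
    using \<xi> unfolding Cb_def bounded_iff by auto
  obtain \<phi> \<psi> where K: "(\<phi>, \<psi>) \<in> feasible_lip_pairs c (3 * M)" and "oplus \<xi> \<zeta> \<le> oplus \<phi> \<psi>"
    using feasible_pair_le_feasible_lip_pair[of c M \<xi> A, OF c A feas] by blast
  moreover have "\<phi> \<in> Cb" "\<psi> \<in> Cb"
    using K feasible_lip_pairs_subset_Cb[OF H] by auto
  ultimately have "R \<xi> \<zeta> \<le> R \<phi> \<psi>"
    using R_mono \<xi> \<zeta> by blast
  also have "\<dots> \<le> R \<phi>\<^sub>0 \<psi>\<^sub>0"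
    by (rule max[OF K])
  finally show "R \<xi> \<zeta> \<le> R \<phi>\<^sub>0 \<psi>\<^sub>0" .
qed

lemma attains_max_on_feasible_lip_pairs:
  assumes c: "\<And>x y. \<bar>c x y\<bar> \<le> M" and H: "property_H c"
    and R_usc: "\<forall>C D. unif_bdd_equicont C \<and> unif_bdd_equicont D \<longrightarrow>
                   usc_on (C \<times> D) (\<lambda>p. R (fst p) (snd p))"
  obtains \<phi>\<^sub>0 \<psi>\<^sub>0 where "(\<phi>\<^sub>0, \<psi>\<^sub>0) \<in> feasible_lip_pairs c (3 * M)"
    and "\<And>\<phi> \<psi>. (\<phi>, \<psi>) \<in> feasible_lip_pairs c (3 * M) \<Longrightarrow> R \<phi> \<psi> \<le> R \<phi>\<^sub>0 \<psi>\<^sub>0"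
proof -
  have "oplus (\<lambda>_. - M) (\<lambda>_. 0) \<le> c"
    unfolding oplus_le_iff using c by (simp add: abs_le_iff minus_le_iff)
  then have "feasible_lip_pairs c (3 * M) \<noteq> {}"
    using feasible_pair_le_feasible_lip_pair[of c M "\<lambda>_. - M" "\<bar>M\<bar>" "\<lambda>_. 0", OF c] by auto
  moreover have "usc_on (feasible_lip_pairs c (3 * M)) (\<lambda>p. R (fst p) (snd p))"
    by (rule usc_on_subset[OF _ feasible_lip_pairs_subset])
      (use R_usc unif_bdd_equicont_lip_bdd_sets[OF H] in blast)
  ultimately show ?thesis
    using usc_on_attains_max[OF compact_feasible_lip_pairs] that by fastforce
qed

theorem mainTheorem3:
  fixes c :: "'a::t2_space \<Rightarrow> 'b::t2_space \<Rightarrow> real"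
    and R :: "('a \<Rightarrow> real) \<Rightarrow> ('b \<Rightarrow> real) \<Rightarrow> ereal"
  assumes crX: "completely_regular_space (euclidean :: 'a topology)"
    and crY: "completely_regular_space (euclidean :: 'b topology)"
    and c_bdd: "\<exists>M. \<forall>x y. \<bar>c x y\<bar> \<le> M"
    and c_H: "property_H c"
    and R_no_pinf: "\<forall>\<phi>\<in>Cb. \<forall>\<psi>\<in>Cb. R \<phi> \<psi> \<noteq> \<infinity>"
    and R_proper: "\<exists>\<phi>\<in>Cb. \<exists>\<psi>\<in>Cb. R \<phi> \<psi> \<noteq> -\<infinity>"
    and R_mono: "\<forall>\<phi>\<in>Cb. \<forall>\<psi>\<in>Cb. \<forall>\<phi>'\<in>Cb. \<forall>\<psi>'\<in>Cb.
                   oplus \<phi> \<psi> \<le> oplus \<phi>' \<psi>' \<longrightarrow> R \<phi> \<psi> \<le> R \<phi>' \<psi>'"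
    and R_usc: "\<forall>C D. unif_bdd_equicont C \<and> unif_bdd_equicont D \<longrightarrow>
                   usc_on (C \<times> D) (\<lambda>p. R (fst p) (snd p))"
  shows "\<exists>\<xi>0\<in>Cb. cbtrans c (ctrans c \<xi>0) \<in> Cb \<and> ctrans c \<xi>0 \<in> Cb \<and>
           oplus (cbtrans c (ctrans c \<xi>0)) (ctrans c \<xi>0) \<le> c \<and>
           R (cbtrans c (ctrans c \<xi>0)) (ctrans c \<xi>0) = vmax_GDP c R"
proof -
  obtain M where c: "\<And>x y. \<bar>c x y\<bar> \<le> M"
    using c_bdd by blast
  obtain \<phi> \<psi> where opt: "(\<phi>, \<psi>) \<in> feasible_lip_pairs c (3 * M)"
    and max: "\<And>\<phi>' \<psi>'. (\<phi>', \<psi>') \<in> feasible_lip_pairs c (3 * M) \<Longrightarrow> R \<phi>' \<psi>' \<le> R \<phi> \<psi>"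
    using attains_max_on_feasible_lip_pairs[of c M, OF c c_H R_usc] by metis
  have \<phi>_bdd: "\<And>x. \<bar>\<phi> x\<bar> \<le> 3 * M"
    using opt by (simp add: feasible_lip_pairs_def lip_bdd_set_def)
  note double_Cb = double_ctrans_in_Cb[of c M \<phi> "3 * M", OF c_H c \<phi>_bdd]
    and double_feasible = double_ctrans_feasible[of c M \<phi> "3 * M", OF c \<phi>_bdd]
  have "oplus \<phi> \<psi> \<le> c" "\<phi> \<in> Cb" "\<psi> \<in> Cb"
    using opt feasible_lip_pairs_subset_Cb[OF c_H] by (auto simp: feasible_lip_pairs_def)
  then have "R \<phi> \<psi> \<le> R (cbtrans c (ctrans c \<phi>)) (ctrans c \<phi>)"
    using R_mono double_Cb double_ctrans_improves[of c M \<phi> "3 * M", OF c \<phi>_bdd] by blast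
  moreover have "R (cbtrans c (ctrans c \<phi>)) (ctrans c \<phi>) \<le> vmax_GDP c R"
    using double_Cb double_feasible by (intro vmax_GDP_upper)
  moreover have "vmax_GDP c R \<le> R \<phi> \<psi>"
    using vmax_GDP_le_max_on_feasible_lip_pairs[of c M, OF c c_H R_mono max] .
  ultimately show ?thesis
    using \<open>\<phi> \<in> Cb\<close> double_Cb double_feasible by (metis order_antisym order_trans)
qed

end
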